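(* Let $\varphi(t,a,v)$ solve the non-autonomous first passage time problem (NFPT) defined in the context, let $P(t,a)=\int_{-\infty}^1\varphi(t,a,v)\,dv>0$, $ISI(t,a)=-\frac{\sigma^2}{2}\partial_v\varphi(t,a,1)$, and define the hazard rate $S(t,a)=ISI(t,a)/P(t,a)$. Let $n(t,a)$ solve the age-structured system $$\partial_t n(t,a)+\partial_a n(t,a)+S(t,a)n(t,a)=0,\qquad n(t,0)=\int_0^\infty S(t,a)n(t,a)\,da.$$ Then $$\pi(t,a,v)=\frac{\varphi(t,a,v)}{P(t,a)}\,n(t,a)$$ satisfies the equation $\partial_t\pi+\partial_a\pi+\partial_v[(\mu(t)-v)\pi]-\frac{\sigma^2}{2}\partial_v^2\pi=0$, the absorbing condition $\pi(t,a,1)=0$, the no-flux condition $\lim_{v\to-\infty}[(v-\mu(t))\pi+\frac{\sigma^2}{2}\partial_v\pi]=0$, and the reset condition $\pi(t,0,v)=\delta(v-v_r)\,r(t)$ with $r(t)=\int_0^\infty S(t,a)n(t,a)\,da=\int_0^\infty\rho(t,a)\,da$, where $\rho(t,a)=-\frac{\sigma^2}{2}\partial_v\pi(t,a,1)$; i.e. $\pi$ solves the age-and-potential system with time-dependent stimulus $\mu(t)$.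
   Context: Fix $\sigma>0$, a reset potential $v_r<1$ and a time-dependent stimulus $\mu:[0,\infty)\to\mathbb R$. The non-autonomous first passage time problem (NFPT): find $\varphi(t,a,v)$, $t>0$, $a>0$, $v<1$, such that $$\partial_t\varphi+\partial_a\varphi+\partial_v\big[(\mu(t)-v)\varphi\big]-\frac{\sigma^2}{2}\partial_v^2\varphi=0,$$ $\varphi(t,0,v)=\delta(v-v_r)$, $\varphi(t,a,1)=0$, $\lim_{v\to-\infty}\big[(v-\mu(t))\varphi+\frac{\sigma^2}{2}\partial_v\varphi\big]=0$, and $\varphi(0,a,v)=\varphi_0(a,v)$, where $\varphi_0$ is the solution of the autonomous first passage time problem with constant stimulus $\mu(0)$: $\partial_a\varphi_0+\partial_v[(\mu(0)-v)\varphi_0]-\frac{\sigma^2}{2}\partial_v^2\varphi_0=0$, $\varphi_0(0,v)=\delta(v-v_r)$, $\varphi_0(a,1)=0$, no-flux condition at $v\to-\infty$. *)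

theory Defs
  imports "HOL-Analysis.Analysis"
begin

definition d_t :: "(real \<Rightarrow> real \<Rightarrow> real \<Rightarrow> real) \<Rightarrow> real \<Rightarrow> real \<Rightarrow> real \<Rightarrow> real" where
  "d_t f t a v = deriv (\<lambda>s. f s a v) t"

definition d_a :: "(real \<Rightarrow> real \<Rightarrow> real \<Rightarrow> real) \<Rightarrow> real \<Rightarrow> real \<Rightarrow> real \<Rightarrow> real" where
  "d_a f t a v = deriv (\<lambda>b. f t b v) a"

definition d_v :: "(real \<Rightarrow> real \<Rightarrow> real \<Rightarrow> real) \<Rightarrow> real \<Rightarrow> real \<Rightarrow> real \<Rightarrow> real" where
  "d_v f t a v = deriv (\<lambda>w. f t a w) v"

definition d_vv :: "(real \<Rightarrow> real \<Rightarrow> real \<Rightarrow> real) \<Rightarrow> real \<Rightarrow> real \<Rightarrow> real \<Rightarrow> real" where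
  "d_vv f t a v = deriv (\<lambda>w. d_v f t a w) v"

definition left_deriv :: "(real \<Rightarrow> real) \<Rightarrow> real \<Rightarrow> real" where
  "left_deriv f x = (THE D. (f has_real_derivative D) (at_left x))"

text \<open>f(t,0,v) = c * delta(v - vr), understood weakly: for every bounded continuous
  test function g on (-inf,1], the integral of f(t,a,.) g tends to c g(vr) as a -> 0+.\<close>
definition weak_reset :: "(real \<Rightarrow> real \<Rightarrow> real \<Rightarrow> real) \<Rightarrow> real \<Rightarrow> real \<Rightarrow> real \<Rightarrow> bool" where
  "weak_reset f vr c t \<longleftrightarrow>
     (\<forall>g. continuous_on {..1} g \<and> bounded (g ` {..1}) \<longrightarrow>
        ((\<lambda>a. LINT v:{..1}|lborel. f t a v * g v) \<longlongrightarrow> c * g vr) (at_right 0))"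

definition fp_solution ::
  "(real \<Rightarrow> real) \<Rightarrow> real \<Rightarrow> (real \<Rightarrow> real \<Rightarrow> real \<Rightarrow> real) \<Rightarrow> bool" where
  "fp_solution \<mu> \<sigma> f \<longleftrightarrow>
     (\<forall>t>0. \<forall>a>0. \<forall>v<1.
        (\<lambda>s. f s a v) differentiable (at t) \<and>
        (\<lambda>b. f t b v) differentiable (at a) \<and>
        (\<lambda>w. f t a w) differentiable (at v) \<and>
        (\<lambda>w. d_v f t a w) differentiable (at v) \<and>
        d_t f t a v + d_a f t a v + deriv (\<lambda>w. (\<mu> t - w) * f t a w) v
          - \<sigma>\<^sup>2 / 2 * d_vv f t a v = 0) \<and>
     (\<forall>t>0. \<forall>a>0. f t a 1 = 0) \<and>
     (\<forall>t>0. \<forall>a>0.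
        ((\<lambda>v. (v - \<mu> t) * f t a v + \<sigma>\<^sup>2 / 2 * d_v f t a v) \<longlongrightarrow> 0) at_bot)"

definition afpt_solution :: "real \<Rightarrow> real \<Rightarrow> real \<Rightarrow> (real \<Rightarrow> real \<Rightarrow> real) \<Rightarrow> bool" where
  "afpt_solution m \<sigma> vr f \<longleftrightarrow>
     (\<forall>a>0. \<forall>v<1.
        (\<lambda>b. f b v) differentiable (at a) \<and>
        (\<lambda>w. f a w) differentiable (at v) \<and>
        (\<lambda>w. deriv (\<lambda>u. f a u) w) differentiable (at v) \<and>
        deriv (\<lambda>b. f b v) a + deriv (\<lambda>w. (m - w) * f a w) v
          - \<sigma>\<^sup>2 / 2 * deriv (\<lambda>w. deriv (\<lambda>u. f a u) w) v = 0) \<and>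
     (\<forall>a>0. f a 1 = 0) \<and>
     (\<forall>a>0. ((\<lambda>v. (v - m) * f a v + \<sigma>\<^sup>2 / 2 * deriv (\<lambda>u. f a u) v) \<longlongrightarrow> 0) at_bot) \<and>
     (\<forall>g. continuous_on {..1} g \<and> bounded (g ` {..1}) \<longrightarrow>
        ((\<lambda>a. LINT v:{..1}|lborel. f a v * g v) \<longlongrightarrow> g vr) (at_right 0))"

definition Psurv :: "(real \<Rightarrow> real \<Rightarrow> real \<Rightarrow> real) \<Rightarrow> real \<Rightarrow> real \<Rightarrow> real" where
  "Psurv f t a = (LINT v:{..1}|lborel. f t a v)"

definition ISI :: "real \<Rightarrow> (real \<Rightarrow> real \<Rightarrow> real \<Rightarrow> real) \<Rightarrow> real \<Rightarrow> real \<Rightarrow> real" where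
  "ISI \<sigma> f t a = - (\<sigma>\<^sup>2 / 2) * left_deriv (\<lambda>v. f t a v) 1"

definition hazard :: "real \<Rightarrow> (real \<Rightarrow> real \<Rightarrow> real \<Rightarrow> real) \<Rightarrow> real \<Rightarrow> real \<Rightarrow> real" where
  "hazard \<sigma> f t a = ISI \<sigma> f t a / Psurv f t a"

end

theory Submission
  imports Defs
begin

(* Write pi = c * phi with c(t,a) = n(t,a) / P(t,a). The Fokker-Planck operator acts on v only,
   so pi solves it as soon as c is transported: d_t c + d_a c = 0. Integrating the equation for phi
   over v < 1, the no-flux condition at -infinity and the absorbing condition at the threshold give
   d_t P + d_a P = sigma^2/2 * d_v phi(t,a,1-) = -ISI, so P obeys the same transport equation with
   loss rate S = ISI/P as n does, and their quotient is transported. The reset mass and the firing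
   rate of pi are those of phi, scaled by the same factor c. *)

lemma set_integral_eq_diff_of_deriv:
  fixes G g :: "real \<Rightarrow> real"
  assumes "y \<le> x"
    and deriv: "\<And>z. z \<in> {y..x} \<Longrightarrow> (G has_real_derivative g z) (at z)"
    and int: "set_integrable lborel {y..x} g"
  shows "(LINT v:{y..x}|lborel. g v) = G x - G y"
proof -
  have "(g has_integral (G x - G y)) {y..x}"
  proof (rule fundamental_theorem_of_calculus[OF \<open>y \<le> x\<close>])
    fix z assume "z \<in> {y..x}"
    show "(G has_vector_derivative g z) (at z within {y..x})"
      unfolding has_real_derivative_iff_has_vector_derivative[symmetric]
      by (rule has_field_derivative_at_within[OF deriv[OF \<open>z \<in> {y..x}\<close>]])
  qed
  then show ?thesis
    using set_borel_integral_eq_integral(2)[OF int] by (simp add: integral_unique)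
qed

lemma antiderivative_tendsto_set_integral_at_left:
  fixes G g :: "real \<Rightarrow> real"
  assumes deriv: "\<And>x. x < b \<Longrightarrow> (G has_real_derivative g x) (at x)"
    and int: "set_integrable lborel {..<b} g"
    and G_at_bot: "(G \<longlongrightarrow> 0) at_bot"
  shows "(G \<longlongrightarrow> (LINT v:{..<b}|lborel. g v)) (at_left b)"
proof -
  define c where "c = b - 1"
  have ftc: "(LINT v:{y..x}|lborel. g v) = G x - G y" if "y \<le> x" "x < b" for x y
    using that by (intro set_integral_eq_diff_of_deriv deriv set_integrable_subset[OF int]) auto
  have int_low: "set_integrable lborel {..c} g" and int_high: "set_integrable lborel {c..<b} g"
    by (auto simp: c_def intro: set_integrable_subset[OF int])
  have "((\<lambda>y. LINT v:{y..c}|lborel. g v) \<longlongrightarrow> (LINT v:{..c}|lborel. g v)) at_bot"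
    by (rule tendsto_set_lebesgue_integral_at_bot[OF _ int_low]) auto
  moreover have "eventually (\<lambda>y. (LINT v:{y..c}|lborel. g v) = G c - G y) at_bot"
    using eventually_le_at_bot[of c] by eventually_elim (rule ftc, auto simp: c_def)
  ultimately have "((\<lambda>y. G c - G y) \<longlongrightarrow> (LINT v:{..c}|lborel. g v)) at_bot"
    by (rule Lim_transform_eventually)
  moreover have "((\<lambda>y. G c - G y) \<longlongrightarrow> G c - 0) at_bot"
    by (intro tendsto_intros G_at_bot)
  ultimately have G_c: "G c = (LINT v:{..c}|lborel. g v)"
    using tendsto_unique[OF trivial_limit_at_bot_linorder] by fastforce
  have "c < b"
    by (simp add: c_def)
  from eventually_at_left_real[OF this]
  have "eventually (\<lambda>x. c < x \<and> x < b) (at_left b)"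
    by simp
  then have ftc_high: "eventually (\<lambda>x. (LINT v:{c..x}|lborel. g v) = G x - G c) (at_left b)"
    by eventually_elim (auto intro: ftc)
  have "((\<lambda>x. LINT v:{c..x}|lborel. g v) \<longlongrightarrow> (LINT v:{c..<b}|lborel. g v)) (at_left b)"
    by (rule tendsto_set_lebesgue_integral_at_left[OF _ _ int_high]) (auto simp: c_def)
  then have "((\<lambda>x. G x - G c) \<longlongrightarrow> (LINT v:{c..<b}|lborel. g v)) (at_left b)"
    using ftc_high by (rule Lim_transform_eventually)
  then have "((\<lambda>x. (G x - G c) + G c) \<longlongrightarrow> (LINT v:{c..<b}|lborel. g v) + G c) (at_left b)"
    by (intro tendsto_intros)
  moreover have "(LINT v:{..c} \<union> {c..<b}|lborel. g v)
      = (LINT v:{..c}|lborel. g v) + (LINT v:{c..<b}|lborel. g v)"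
    by (rule set_integral_Un_AE[OF _ _ _ int_low int_high])
       (auto intro: eventually_mono[OF AE_lborel_singleton[of c]])
  moreover have "{..c} \<union> {c..<b} = {..<b}"
    by (auto simp: c_def)
  ultimately show ?thesis
    using G_c by (simp add: add.commute)
qed

lemma left_deriv_eqI:
  assumes "(f has_real_derivative D) (at_left x)"
  shows "left_deriv f x = D"
  unfolding left_deriv_def
proof (rule the_equality)
  show "D' = D" if "(f has_real_derivative D') (at_left x)" for D'
    using has_field_derivative_unique[OF that assms] by simp
qed (fact assms)

lemma left_deriv_cmult:
  assumes "f differentiable (at_left x)"
  shows "left_deriv (\<lambda>v. c * f v) x = c * left_deriv f x"
proof -
  obtain D where D: "(f has_real_derivative D) (at_left x)"
    using assms by (auto simp: real_differentiable_def)
  show ?thesis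
    using left_deriv_eqI[OF D] left_deriv_eqI[OF DERIV_cmult[OF D]] by simp
qed

lemma has_left_derivative_of_deriv_tendsto:
  fixes f f' :: "real \<Rightarrow> real"
  assumes cont: "continuous (at_left b) f"
    and deriv: "\<And>x. x < b \<Longrightarrow> (f has_real_derivative f' x) (at x)"
    and lim: "(f' \<longlongrightarrow> L) (at_left b)"
  shows "(f has_real_derivative L) (at_left b)"
proof -
  have left_of_b: "eventually (\<lambda>x. x < b) (at_left b)"
    by (simp add: eventually_at_filter)
  have "((\<lambda>x. (f x - f b) / (x - b)) \<longlongrightarrow> L) (at_left b)"
  proof (rule lhopital_left[where f' = f' and g' = "\<lambda>_. 1"])
    show "((\<lambda>x. f x - f b) \<longlongrightarrow> 0) (at_left b)"
      using cont by (simp add: continuous_within LIM_zero)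
    show "((\<lambda>x. x - b) \<longlongrightarrow> 0) (at_left b)"
      by (intro tendsto_eq_intros) auto
    show "eventually (\<lambda>x. x - b \<noteq> 0) (at_left b)"
      by (simp add: eventually_at_filter)
    show "eventually (\<lambda>x. (1::real) \<noteq> 0) (at_left b)"
      by simp
    show "eventually (\<lambda>x. ((\<lambda>x. f x - f b) has_real_derivative f' x) (at x)) (at_left b)"
      using left_of_b by eventually_elim (auto intro!: derivative_eq_intros deriv)
    show "eventually (\<lambda>x. ((\<lambda>x. x - b) has_real_derivative 1) (at x)) (at_left b)"
      by (auto intro!: always_eventually derivative_eq_intros)
    show "((\<lambda>x. f' x / 1) \<longlongrightarrow> L) (at_left b)"
      using lim by simp
  qed
  then show ?thesis
    by (simp add: has_field_derivative_iff)
qed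

lemma deriv_drift:
  fixes f :: "real \<Rightarrow> real"
  assumes "(f has_real_derivative f') (at v)"
  shows "deriv (\<lambda>w. (m - w) * f w) v = (m - v) * f' - f v"
  by (rule DERIV_imp_deriv) (auto intro!: derivative_eq_intros assms)

lemma fp_solutionD:
  assumes "fp_solution \<mu> \<sigma> \<phi>" "t > 0" "a > 0" "v < 1"
  shows fp_solution_has_d_t: "((\<lambda>s. \<phi> s a v) has_real_derivative d_t \<phi> t a v) (at t)"
    and fp_solution_has_d_a: "((\<lambda>b. \<phi> t b v) has_real_derivative d_a \<phi> t a v) (at a)"
    and fp_solution_has_d_v: "((\<lambda>w. \<phi> t a w) has_real_derivative d_v \<phi> t a v) (at v)"
    and fp_solution_has_d_vv: "((\<lambda>w. d_v \<phi> t a w) has_real_derivative d_vv \<phi> t a v) (at v)"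
    and fp_solution_pde: "d_t \<phi> t a v + d_a \<phi> t a v + (\<mu> t - v) * d_v \<phi> t a v - \<phi> t a v
                            - \<sigma>\<^sup>2 / 2 * d_vv \<phi> t a v = 0"
proof -
  note pointwise = assms(1)[unfolded fp_solution_def, THEN conjunct1, rule_format, OF assms(2-4)]
  show "((\<lambda>s. \<phi> s a v) has_real_derivative d_t \<phi> t a v) (at t)"
    and "((\<lambda>b. \<phi> t b v) has_real_derivative d_a \<phi> t a v) (at a)"
    and d_v: "((\<lambda>w. \<phi> t a w) has_real_derivative d_v \<phi> t a v) (at v)"
    and "((\<lambda>w. d_v \<phi> t a w) has_real_derivative d_vv \<phi> t a v) (at v)"
    using pointwise unfolding d_t_def d_a_def d_v_def d_vv_def
    by (simp_all add: DERIV_deriv_iff_real_differentiable)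
  show "d_t \<phi> t a v + d_a \<phi> t a v + (\<mu> t - v) * d_v \<phi> t a v - \<phi> t a v
          - \<sigma>\<^sup>2 / 2 * d_vv \<phi> t a v = 0"
    using pointwise deriv_drift[OF d_v] by simp
qed

lemma fp_solution_absorbing: "fp_solution \<mu> \<sigma> \<phi> \<Longrightarrow> t > 0 \<Longrightarrow> a > 0 \<Longrightarrow> \<phi> t a 1 = 0"
  by (simp add: fp_solution_def)

lemma fp_solution_no_flux:
  "fp_solution \<mu> \<sigma> \<phi> \<Longrightarrow> t > 0 \<Longrightarrow> a > 0 \<Longrightarrow>
     ((\<lambda>v. (v - \<mu> t) * \<phi> t a v + \<sigma>\<^sup>2 / 2 * d_v \<phi> t a v) \<longlongrightarrow> 0) at_bot"
  by (simp add: fp_solution_def)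

lemma fp_solution_flux_has_derivative:
  assumes "fp_solution \<mu> \<sigma> \<phi>" "t > 0" "a > 0" "v < 1"
  shows "((\<lambda>w. (w - \<mu> t) * \<phi> t a w + \<sigma>\<^sup>2 / 2 * d_v \<phi> t a w) has_real_derivative
           d_t \<phi> t a v + d_a \<phi> t a v) (at v)"
proof -
  have "((\<lambda>w. (w - \<mu> t) * \<phi> t a w + \<sigma>\<^sup>2 / 2 * d_v \<phi> t a w) has_real_derivative
          (v - \<mu> t) * d_v \<phi> t a v + \<phi> t a v + \<sigma>\<^sup>2 / 2 * d_vv \<phi> t a v) (at v)"
    by (auto intro!: derivative_eq_intros fp_solutionD[OF assms])
  moreover have "(v - \<mu> t) * d_v \<phi> t a v + \<phi> t a v + \<sigma>\<^sup>2 / 2 * d_vv \<phi> t a v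
      = d_t \<phi> t a v + d_a \<phi> t a v"
    using fp_solution_pde[OF assms] by (simp add: algebra_simps)
  ultimately show ?thesis
    by simp
qed

lemma fp_solution_flux_balance:
  assumes fp: "fp_solution \<mu> \<sigma> \<phi>" and "t > 0" "a > 0" "\<sigma> \<noteq> 0"
    and int_t: "set_integrable lborel {..<1} (d_t \<phi> t a)"
    and int_a: "set_integrable lborel {..<1} (d_a \<phi> t a)"
    and cont: "continuous (at_left 1) (\<lambda>v. \<phi> t a v)"
  shows "(LINT v:{..<1}|lborel. d_t \<phi> t a v) + (LINT v:{..<1}|lborel. d_a \<phi> t a v)
           = \<sigma>\<^sup>2 / 2 * left_deriv (\<lambda>v. \<phi> t a v) 1"
proof -
  define J where "J w = (w - \<mu> t) * \<phi> t a w + \<sigma>\<^sup>2 / 2 * d_v \<phi> t a w" for w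
  define I where "I = (LINT v:{..<1}|lborel. d_t \<phi> t a v + d_a \<phi> t a v)"
  have I_split: "I = (LINT v:{..<1}|lborel. d_t \<phi> t a v) + (LINT v:{..<1}|lborel. d_a \<phi> t a v)"
    unfolding I_def using int_t int_a by (rule set_integral_add(2))
  have "(J \<longlongrightarrow> I) (at_left 1)"
    unfolding I_def J_def
    by (intro antiderivative_tendsto_set_integral_at_left fp_solution_flux_has_derivative
          fp_solution_no_flux set_integral_add(1) int_t int_a) (use fp assms in auto)
  moreover have "((\<lambda>v. \<phi> t a v) \<longlongrightarrow> 0) (at_left 1)"
    using cont fp_solution_absorbing[OF fp \<open>t > 0\<close> \<open>a > 0\<close>] by (simp add: continuous_within)
  ultimately have "((\<lambda>w. (J w - (w - \<mu> t) * \<phi> t a w) * (2 / \<sigma>\<^sup>2)) \<longlongrightarrow>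
                     (I - (1 - \<mu> t) * 0) * (2 / \<sigma>\<^sup>2)) (at_left 1)"
    by (intro tendsto_intros)
  then have "((\<lambda>w. d_v \<phi> t a w) \<longlongrightarrow> I * (2 / \<sigma>\<^sup>2)) (at_left 1)"
    using \<open>\<sigma> \<noteq> 0\<close> by (simp add: J_def field_simps)
  then have "((\<lambda>v. \<phi> t a v) has_real_derivative I * (2 / \<sigma>\<^sup>2)) (at_left 1)"
    using has_left_derivative_of_deriv_tendsto[OF cont fp_solution_has_d_v[OF fp \<open>t > 0\<close> \<open>a > 0\<close>]]
    by blast
  then show ?thesis
    using \<open>\<sigma> \<noteq> 0\<close> by (simp add: left_deriv_eqI I_split)
qed

lemma d_v_cmult:
  assumes "((\<lambda>w. f t a w) has_real_derivative D) (at v)"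
  shows "d_v (\<lambda>t a v. c t a * f t a v) t a v = c t a * D"
  unfolding d_v_def by (intro DERIV_imp_deriv DERIV_cmult assms)

lemma fp_solution_cmult_has_d_vv:
  assumes fp: "fp_solution \<mu> \<sigma> \<phi>" and ta: "t > 0" "a > 0" and "v < 1"
  shows "((\<lambda>w. d_v (\<lambda>t a v. c t a * \<phi> t a v) t a w) has_real_derivative c t a * d_vv \<phi> t a v) (at v)"
proof -
  have "eventually (\<lambda>w. w < 1) (nhds v)"
    using eventually_nhds_in_open[of "{..<1}" v] \<open>v < 1\<close> by simp
  then have d_v_eq: "eventually (\<lambda>w. d_v (\<lambda>t a v. c t a * \<phi> t a v) t a w = c t a * d_v \<phi> t a w) (nhds v)"
    by eventually_elim (rule d_v_cmult[where f = \<phi>, OF fp_solution_has_d_v[OF fp ta]])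
  have "((\<lambda>w. c t a * d_v \<phi> t a w) has_real_derivative c t a * d_vv \<phi> t a v) (at v)"
    by (intro DERIV_cmult fp_solution_has_d_vv[OF fp ta \<open>v < 1\<close>])
  then show ?thesis
    using DERIV_cong_ev[OF refl d_v_eq refl] by simp
qed

lemma fp_solution_cmult_no_flux:
  assumes fp: "fp_solution \<mu> \<sigma> \<phi>" and ta: "t > 0" "a > 0"
  shows "((\<lambda>v. (v - \<mu> t) * (c t a * \<phi> t a v)
             + \<sigma>\<^sup>2 / 2 * d_v (\<lambda>t a v. c t a * \<phi> t a v) t a v) \<longlongrightarrow> 0) at_bot"
proof -
  have "eventually (\<lambda>v::real. v < 1) at_bot"
    by simp
  then have "eventually (\<lambda>v. c t a * ((v - \<mu> t) * \<phi> t a v + \<sigma>\<^sup>2 / 2 * d_v \<phi> t a v)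
      = (v - \<mu> t) * (c t a * \<phi> t a v) + \<sigma>\<^sup>2 / 2 * d_v (\<lambda>t a v. c t a * \<phi> t a v) t a v) at_bot"
    by eventually_elim
       (simp add: d_v_cmult[where f = \<phi>, OF fp_solution_has_d_v[OF fp ta]] algebra_simps)
  moreover have "((\<lambda>v. c t a * ((v - \<mu> t) * \<phi> t a v + \<sigma>\<^sup>2 / 2 * d_v \<phi> t a v)) \<longlongrightarrow> 0) at_bot"
    using tendsto_mult_right_zero[OF fp_solution_no_flux[OF fp ta]] .
  ultimately show ?thesis
    by (rule Lim_transform_eventually[rotated])
qed

lemma fp_solution_cmult:
  assumes fp: "fp_solution \<mu> \<sigma> \<phi>"
    and c_diff_t: "\<And>t a. t > 0 \<Longrightarrow> a > 0 \<Longrightarrow> (\<lambda>s. c s a) differentiable (at t)"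
    and c_diff_a: "\<And>t a. t > 0 \<Longrightarrow> a > 0 \<Longrightarrow> (\<lambda>b. c t b) differentiable (at a)"
    and transport: "\<And>t a. t > 0 \<Longrightarrow> a > 0 \<Longrightarrow> deriv (\<lambda>s. c s a) t + deriv (\<lambda>b. c t b) a = 0"
  shows "fp_solution \<mu> \<sigma> (\<lambda>t a v. c t a * \<phi> t a v)"
  unfolding fp_solution_def
proof (intro conjI allI impI)
  fix t a v :: real assume ta: "t > 0" "a > 0" and "v < 1"
  let ?\<pi> = "\<lambda>t a v. c t a * \<phi> t a v"
  note \<phi>_derivs = fp_solutionD[OF fp ta \<open>v < 1\<close>]
  define c\<^sub>t c\<^sub>a where "c\<^sub>t = deriv (\<lambda>s. c s a) t" and "c\<^sub>a = deriv (\<lambda>b. c t b) a"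
  have c_derivs: "((\<lambda>s. c s a) has_real_derivative c\<^sub>t) (at t)"
    "((\<lambda>b. c t b) has_real_derivative c\<^sub>a) (at a)"
    using c_diff_t[OF ta] c_diff_a[OF ta] unfolding c\<^sub>t_def c\<^sub>a_def
    by (simp_all add: DERIV_deriv_iff_real_differentiable)
  have \<pi>_t: "((\<lambda>s. ?\<pi> s a v) has_real_derivative c\<^sub>t * \<phi> t a v + c t a * d_t \<phi> t a v) (at t)"
    by (auto intro!: derivative_eq_intros c_derivs \<phi>_derivs)
  have \<pi>_a: "((\<lambda>b. ?\<pi> t b v) has_real_derivative c\<^sub>a * \<phi> t a v + c t a * d_a \<phi> t a v) (at a)"
    by (auto intro!: derivative_eq_intros c_derivs \<phi>_derivs)
  have \<pi>_v: "((\<lambda>w. ?\<pi> t a w) has_real_derivative c t a * d_v \<phi> t a v) (at v)"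
    by (auto intro!: derivative_eq_intros \<phi>_derivs)
  note \<pi>_vv = fp_solution_cmult_has_d_vv[OF fp ta \<open>v < 1\<close>, of c]
  show "(\<lambda>s. ?\<pi> s a v) differentiable (at t)" "(\<lambda>b. ?\<pi> t b v) differentiable (at a)"
    "(\<lambda>w. ?\<pi> t a w) differentiable (at v)" "(\<lambda>w. d_v ?\<pi> t a w) differentiable (at v)"
    using \<pi>_t \<pi>_a \<pi>_v \<pi>_vv unfolding real_differentiable_def by blast+
  have "d_t ?\<pi> t a v + d_a ?\<pi> t a v + deriv (\<lambda>w. (\<mu> t - w) * ?\<pi> t a w) v - \<sigma>\<^sup>2 / 2 * d_vv ?\<pi> t a v
      = c t a * (d_t \<phi> t a v + d_a \<phi> t a v + (\<mu> t - v) * d_v \<phi> t a v - \<phi> t a v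
                 - \<sigma>\<^sup>2 / 2 * d_vv \<phi> t a v) + (c\<^sub>t + c\<^sub>a) * \<phi> t a v"
    using DERIV_imp_deriv[OF \<pi>_t] DERIV_imp_deriv[OF \<pi>_a] DERIV_imp_deriv[OF \<pi>_vv]
      deriv_drift[OF \<pi>_v]
    unfolding d_t_def d_a_def d_vv_def[of ?\<pi>]
    by (simp add: algebra_simps)
  then show "d_t ?\<pi> t a v + d_a ?\<pi> t a v + deriv (\<lambda>w. (\<mu> t - w) * ?\<pi> t a w) v
               - \<sigma>\<^sup>2 / 2 * d_vv ?\<pi> t a v = 0"
    using fp_solution_pde[OF fp ta \<open>v < 1\<close>] transport[OF ta] by (simp add: c\<^sub>t_def c\<^sub>a_def)
next
  fix t a :: real assume "t > 0" "a > 0"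
  then show "c t a * \<phi> t a 1 = 0"
    using fp_solution_absorbing[OF fp] by simp
next
  fix t a :: real assume "t > 0" "a > 0"
  then show "((\<lambda>v. (v - \<mu> t) * (c t a * \<phi> t a v)
                 + \<sigma>\<^sup>2 / 2 * d_v (\<lambda>t a v. c t a * \<phi> t a v) t a v) \<longlongrightarrow> 0) at_bot"
    by (rule fp_solution_cmult_no_flux[OF fp])
qed

lemma normalized_density_transport:
  fixes \<phi> :: "real \<Rightarrow> real \<Rightarrow> real \<Rightarrow> real" and n :: "real \<Rightarrow> real \<Rightarrow> real"
  assumes fp: "fp_solution \<mu> \<sigma> \<phi>" and "\<sigma> \<noteq> 0" and ta: "t > 0" "a > 0"
    and int_t: "set_integrable lborel {..<1} (d_t \<phi> t a)"
    and int_a: "set_integrable lborel {..<1} (d_a \<phi> t a)"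
    and cont: "continuous (at_left 1) (\<lambda>v. \<phi> t a v)"
    and P_t: "((\<lambda>s. Psurv \<phi> s a) has_real_derivative (LINT v:{..<1}|lborel. d_t \<phi> t a v)) (at t)"
    and P_a: "((\<lambda>b. Psurv \<phi> t b) has_real_derivative (LINT v:{..<1}|lborel. d_a \<phi> t a v)) (at a)"
    and P_nz: "Psurv \<phi> t a \<noteq> 0"
    and n_t: "(\<lambda>s. n s a) differentiable (at t)" and n_a: "(\<lambda>b. n t b) differentiable (at a)"
    and n_eq: "deriv (\<lambda>s. n s a) t + deriv (\<lambda>b. n t b) a + hazard \<sigma> \<phi> t a * n t a = 0"
  shows "(\<lambda>s. n s a / Psurv \<phi> s a) differentiable (at t)"
    and "(\<lambda>b. n t b / Psurv \<phi> t b) differentiable (at a)"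
    and "deriv (\<lambda>s. n s a / Psurv \<phi> s a) t + deriv (\<lambda>b. n t b / Psurv \<phi> t b) a = 0"
proof -
  define P N P\<^sub>t P\<^sub>a N\<^sub>t N\<^sub>a
    where "P = Psurv \<phi> t a" and "N = n t a"
      and "P\<^sub>t = (LINT v:{..<1}|lborel. d_t \<phi> t a v)" and "P\<^sub>a = (LINT v:{..<1}|lborel. d_a \<phi> t a v)"
      and "N\<^sub>t = deriv (\<lambda>s. n s a) t" and "N\<^sub>a = deriv (\<lambda>b. n t b) a"
  have quotient_t: "((\<lambda>s. n s a / Psurv \<phi> s a) has_real_derivative (N\<^sub>t * P - N * P\<^sub>t) / (P * P)) (at t)"
    using DERIV_divide[OF n_t[unfolded DERIV_deriv_iff_real_differentiable[symmetric]] P_t P_nz]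
    by (simp add: P_def N_def P\<^sub>t_def N\<^sub>t_def)
  have quotient_a: "((\<lambda>b. n t b / Psurv \<phi> t b) has_real_derivative (N\<^sub>a * P - N * P\<^sub>a) / (P * P)) (at a)"
    using DERIV_divide[OF n_a[unfolded DERIV_deriv_iff_real_differentiable[symmetric]] P_a P_nz]
    by (simp add: P_def N_def P\<^sub>a_def N\<^sub>a_def)
  show "(\<lambda>s. n s a / Psurv \<phi> s a) differentiable (at t)"
    and "(\<lambda>b. n t b / Psurv \<phi> t b) differentiable (at a)"
    using quotient_t quotient_a unfolding real_differentiable_def by blast+
  have flux: "P\<^sub>t + P\<^sub>a = \<sigma>\<^sup>2 / 2 * left_deriv (\<lambda>v. \<phi> t a v) 1"
    unfolding P\<^sub>t_def P\<^sub>a_def by (rule fp_solution_flux_balance[OF fp ta \<open>\<sigma> \<noteq> 0\<close> int_t int_a cont])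
  have "N\<^sub>t + N\<^sub>a = (P\<^sub>t + P\<^sub>a) / P * N"
    using n_eq unfolding flux by (simp add: hazard_def ISI_def P_def N_def N\<^sub>t_def N\<^sub>a_def)
  then have balance: "(N\<^sub>t + N\<^sub>a) * P - N * (P\<^sub>t + P\<^sub>a) = 0"
    using P_nz by (simp add: P_def)
  have "deriv (\<lambda>s. n s a / Psurv \<phi> s a) t + deriv (\<lambda>b. n t b / Psurv \<phi> t b) a
      = ((N\<^sub>t + N\<^sub>a) * P - N * (P\<^sub>t + P\<^sub>a)) / (P * P)"
    unfolding DERIV_imp_deriv[OF quotient_t] DERIV_imp_deriv[OF quotient_a]
    by (simp add: add_divide_distrib[symmetric] algebra_simps)
  then show "deriv (\<lambda>s. n s a / Psurv \<phi> s a) t + deriv (\<lambda>b. n t b / Psurv \<phi> t b) a = 0"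
    unfolding balance by simp
qed

lemma weak_reset_Psurv_tendsto:
  assumes "weak_reset \<phi> vr k t"
  shows "((\<lambda>a. Psurv \<phi> t a) \<longlongrightarrow> k) (at_right 0)"
  using assms unfolding weak_reset_def Psurv_def
  by (drule_tac x = "\<lambda>_. 1" in spec) (simp add: image_constant_conv)

lemma weak_reset_cmult:
  assumes reset: "weak_reset \<phi> vr k t" and lim: "(c t \<longlongrightarrow> m) (at_right 0)"
  shows "weak_reset (\<lambda>t a v. c t a * \<phi> t a v) vr (m * k) t"
  unfolding weak_reset_def
proof (intro allI impI)
  fix g :: "real \<Rightarrow> real" assume "continuous_on {..1} g \<and> bounded (g ` {..1})"
  then have "((\<lambda>a. LINT v:{..1}|lborel. \<phi> t a v * g v) \<longlongrightarrow> k * g vr) (at_right 0)"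
    using reset unfolding weak_reset_def by blast
  with lim have "((\<lambda>a. c t a * (LINT v:{..1}|lborel. \<phi> t a v * g v)) \<longlongrightarrow> m * (k * g vr)) (at_right 0)"
    by (rule tendsto_mult)
  then show "((\<lambda>a. LINT v:{..1}|lborel. c t a * \<phi> t a v * g v) \<longlongrightarrow> m * k * g vr) (at_right 0)"
    by (simp add: mult.assoc flip: set_integral_mult_right)
qed

lemma weak_reset_normalized:
  assumes reset: "weak_reset \<phi> vr 1 t" and n_cont: "continuous_on {0..} (n t)"
  shows "weak_reset (\<lambda>t a v. n t a / Psurv \<phi> t a * \<phi> t a v) vr (n t 0) t"
proof -
  have "(n t \<longlongrightarrow> n t 0) (at 0 within {0..})"
    using n_cont by (simp add: continuous_on_def)
  then have "(n t \<longlongrightarrow> n t 0) (at_right 0)"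
    by (rule tendsto_within_subset) auto
  moreover have "(Psurv \<phi> t \<longlongrightarrow> 1) (at_right 0)"
    using reset by (rule weak_reset_Psurv_tendsto)
  ultimately have "((\<lambda>a. n t a / Psurv \<phi> t a) \<longlongrightarrow> n t 0 / 1) (at_right 0)"
    by (rule tendsto_divide) simp
  then show ?thesis
    using weak_reset_cmult[OF reset] by fastforce
qed

theorem theorem4:
  fixes \<mu> :: "real \<Rightarrow> real" and \<sigma> vr :: real
    and \<phi> :: "real \<Rightarrow> real \<Rightarrow> real \<Rightarrow> real"
    and \<phi>0 :: "real \<Rightarrow> real \<Rightarrow> real"
    and n :: "real \<Rightarrow> real \<Rightarrow> real"
    and \<pi> :: "real \<Rightarrow> real \<Rightarrow> real \<Rightarrow> real"
  assumes sigma_pos: "\<sigma> > 0" and vr_lt: "vr < 1"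
    (* phi solves NFPT *)
    and phi_fp: "fp_solution \<mu> \<sigma> \<phi>"
    and phi_reset: "\<forall>t>0. weak_reset \<phi> vr 1 t"
    and phi0_sol: "afpt_solution (\<mu> 0) \<sigma> vr \<phi>0"
    and phi_init: "\<forall>a>0. \<forall>v\<le>1. \<phi> 0 a v = \<phi>0 a v"
    (* regularity: integrability, differentiation under the integral sign,
       and existence of the one-sided derivative at the threshold *)
    and phi_int: "\<forall>t>0. \<forall>a>0. set_integrable lborel {..1} (\<phi> t a)"
    and phi_t_int: "\<forall>t>0. \<forall>a>0. set_integrable lborel {..<1} (d_t \<phi> t a)"
    and phi_a_int: "\<forall>t>0. \<forall>a>0. set_integrable lborel {..<1} (d_a \<phi> t a)"
    and P_deriv_t: "\<forall>t>0. \<forall>a>0.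
          ((\<lambda>s. Psurv \<phi> s a) has_real_derivative (LINT v:{..<1}|lborel. d_t \<phi> t a v)) (at t)"
    and P_deriv_a: "\<forall>t>0. \<forall>a>0.
          ((\<lambda>b. Psurv \<phi> t b) has_real_derivative (LINT v:{..<1}|lborel. d_a \<phi> t a v)) (at a)"
    and phi_left_diff: "\<forall>t>0. \<forall>a>0. (\<lambda>v. \<phi> t a v) differentiable (at_left 1)"
    and P_pos: "\<forall>t>0. \<forall>a>0. Psurv \<phi> t a > 0"
    (* n solves the age-structured system *)
    and n_diff: "\<forall>t>0. \<forall>a>0. (\<lambda>s. n s a) differentiable (at t) \<and> (\<lambda>b. n t b) differentiable (at a)"
    and n_eq: "\<forall>t>0. \<forall>a>0. deriv (\<lambda>s. n s a) t + deriv (\<lambda>b. n t b) a + hazard \<sigma> \<phi> t a * n t a = 0"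
    and n_cont: "\<forall>t>0. continuous_on {0..} (n t)"
    and n_int: "\<forall>t>0. set_integrable lborel {0<..} (\<lambda>a. hazard \<sigma> \<phi> t a * n t a)"
    and n_bc: "\<forall>t>0. n t 0 = (LINT a:{0<..}|lborel. hazard \<sigma> \<phi> t a * n t a)"
    (* definition of pi *)
    and pi_def: "\<forall>t a v. \<pi> t a v = \<phi> t a v / Psurv \<phi> t a * n t a"
  shows "fp_solution \<mu> \<sigma> \<pi> \<and>
         (\<forall>t>0. \<forall>a>0. (\<lambda>v. \<pi> t a v) differentiable (at_left 1)) \<and>
         (\<forall>t>0. weak_reset \<pi> vr (LINT a:{0<..}|lborel. hazard \<sigma> \<phi> t a * n t a) t) \<and>
         (\<forall>t>0. (LINT a:{0<..}|lborel. hazard \<sigma> \<phi> t a * n t a)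
                = (LINT a:{0<..}|lborel. - (\<sigma>\<^sup>2 / 2) * left_deriv (\<lambda>v. \<pi> t a v) 1))"
proof -
  have \<pi>_eq: "\<pi> = (\<lambda>t a v. n t a / Psurv \<phi> t a * \<phi> t a v)"
    using pi_def by (auto simp: fun_eq_iff ac_simps)
  have cont: "continuous (at_left 1) (\<lambda>v. \<phi> t a v)" if "t > 0" "a > 0" for t a
    using phi_left_diff that by (auto intro: differentiable_imp_continuous_within)
  have transport:
    "(\<lambda>s. n s a / Psurv \<phi> s a) differentiable (at t)"
    "(\<lambda>b. n t b / Psurv \<phi> t b) differentiable (at a)"
    "deriv (\<lambda>s. n s a / Psurv \<phi> s a) t + deriv (\<lambda>b. n t b / Psurv \<phi> t b) a = 0"
    if "t > 0" "a > 0" for t a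
    using normalized_density_transport[OF phi_fp _ that phi_t_int[rule_format, OF that]
        phi_a_int[rule_format, OF that] cont[OF that] P_deriv_t[rule_format, OF that]
        P_deriv_a[rule_format, OF that] _ _ _ n_eq[rule_format, OF that]]
      sigma_pos P_pos[rule_format, OF that] n_diff[rule_format, OF that]
    by auto
  have "fp_solution \<mu> \<sigma> \<pi>"
    unfolding \<pi>_eq by (rule fp_solution_cmult[OF phi_fp transport])
  moreover have "(\<lambda>v. \<pi> t a v) differentiable (at_left 1)" if "t > 0" "a > 0" for t a
    unfolding \<pi>_eq using phi_left_diff that by (simp del: times_divide_eq_left)
  moreover have "weak_reset \<pi> vr (n t 0) t" if "t > 0" for t
    unfolding \<pi>_eq using phi_reset n_cont that by (blast intro: weak_reset_normalized)
  moreover have "hazard \<sigma> \<phi> t a * n t a = - (\<sigma>\<^sup>2 / 2) * left_deriv (\<lambda>v. \<pi> t a v) 1"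
    if "t > 0" "a > 0" for t a
    unfolding \<pi>_eq hazard_def ISI_def left_deriv_cmult[OF phi_left_diff[rule_format, OF that]]
    by simp
  ultimately show ?thesis
    using n_bc by (auto intro: set_lebesgue_integral_cong)
qed

end
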